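(* Let $n\ge3$, let $G_2=\overline{L(K_{2,n})}$, and let $G_1$ be a finite bipartite graph with bipartition $(X,Y)$ ($X,Y$ nonempty) such that some vertex is adjacent to all of $X$ and some vertex is adjacent to all of $Y$, and with $\Delta(G_1)\ge n$. Then $G_1$ and $G_2$ are $\mathcal{C}$-$\mathrm{HH}$-symmetric if and only if $G_1$ is $\mathrm{PCM}(n)$-free.
   Context: $\Delta$ denotes maximum degree. $\overline{L(K_{2,n})}$ is the bipartite graph with parts $\{x_1,\dots,x_n\}$, $\{y_1,\dots,y_n\}$ and $x_i\sim y_j$ iff $i\ne j$. A bipartite graph with parts $Z,W$, $|Z|\le|W|$, has a perfect complement matching if there is an injective map $z\mapsto w_z$ from $Z$ to $W$ with $z\nsim w_z$ for all $z$. A $\mathrm{PCM}(n)$ graph is a finite connected bipartite graph with parts $Z,W$, $2\le|Z|\le|W|=n$, having a perfect complement matching. A graph is $\mathrm{PCM}(n)$-free if no $\mathrm{PCM}(n)$ graph is isomorphic to an induced subgraph of it. Subgraphs are induced; a homomorphism maps edges to edges. $G_1$ is $\mathcal{C}$-$\mathrm{HH}$-morphic to $G_2$ if every homomorphism from a finite connected induced subgraph $A$ of $G_1$ onto an induced subgraph $B$ of $G_2$ extends to a homomorphism $G_1\to G_2$; $G_1,G_2$ are $\mathcal{C}$-$\mathrm{HH}$-symmetric if each is $\mathcal{C}$-$\mathrm{HH}$-morphic to the other. *)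

theory Defs
  imports Main
begin

definition graph :: "'a set \<Rightarrow> ('a \<Rightarrow> 'a \<Rightarrow> bool) \<Rightarrow> bool" where
  "graph V E \<longleftrightarrow> (\<forall>u v. E u v \<longrightarrow> u \<in> V \<and> v \<in> V) \<and> (\<forall>u v. E u v \<longrightarrow> E v u) \<and> (\<forall>v. \<not> E v v)"

definition induced :: "('a \<Rightarrow> 'a \<Rightarrow> bool) \<Rightarrow> 'a set \<Rightarrow> 'a \<Rightarrow> 'a \<Rightarrow> bool" where
  "induced E S = (\<lambda>u v. E u v \<and> u \<in> S \<and> v \<in> S)"

definition connected_on :: "('a \<Rightarrow> 'a \<Rightarrow> bool) \<Rightarrow> 'a set \<Rightarrow> bool" where
  "connected_on E S \<longleftrightarrow> S \<noteq> {} \<and> (\<forall>u\<in>S. \<forall>v\<in>S. (induced E S)\<^sup>*\<^sup>* u v)"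

definition max_degree :: "'a set \<Rightarrow> ('a \<Rightarrow> 'a \<Rightarrow> bool) \<Rightarrow> nat" where
  "max_degree V E = Max ((\<lambda>v. card {u \<in> V. E v u}) ` V)"

definition bipartition :: "'a set \<Rightarrow> ('a \<Rightarrow> 'a \<Rightarrow> bool) \<Rightarrow> 'a set \<Rightarrow> 'a set \<Rightarrow> bool" where
  "bipartition V E X Y \<longleftrightarrow> X \<inter> Y = {} \<and> X \<union> Y = V \<and>
     (\<forall>u v. E u v \<longrightarrow> (u \<in> X \<and> v \<in> Y) \<or> (u \<in> Y \<and> v \<in> X))"

definition hom :: "'a set \<Rightarrow> ('a \<Rightarrow> 'a \<Rightarrow> bool) \<Rightarrow> 'b set \<Rightarrow> ('b \<Rightarrow> 'b \<Rightarrow> bool) \<Rightarrow> ('a \<Rightarrow> 'b) \<Rightarrow> bool" where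
  "hom V1 E1 V2 E2 f \<longleftrightarrow> (\<forall>v\<in>V1. f v \<in> V2) \<and>
     (\<forall>u v. u \<in> V1 \<and> v \<in> V1 \<and> E1 u v \<longrightarrow> E2 (f u) (f v))"

definition HH_morphic :: "'a set \<Rightarrow> ('a \<Rightarrow> 'a \<Rightarrow> bool) \<Rightarrow> 'b set \<Rightarrow> ('b \<Rightarrow> 'b \<Rightarrow> bool) \<Rightarrow> bool" where
  "HH_morphic V1 E1 V2 E2 \<longleftrightarrow>
     (\<forall>S T f. S \<subseteq> V1 \<and> finite S \<and> connected_on E1 S \<and> T \<subseteq> V2 \<and>
        hom S (induced E1 S) T (induced E2 T) f \<and> f ` S = T \<longrightarrow>
        (\<exists>g. hom V1 E1 V2 E2 g \<and> (\<forall>x\<in>S. g x = f x)))"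

definition HH_symmetric :: "'a set \<Rightarrow> ('a \<Rightarrow> 'a \<Rightarrow> bool) \<Rightarrow> 'b set \<Rightarrow> ('b \<Rightarrow> 'b \<Rightarrow> bool) \<Rightarrow> bool" where
  "HH_symmetric V1 E1 V2 E2 \<longleftrightarrow> HH_morphic V1 E1 V2 E2 \<and> HH_morphic V2 E2 V1 E1"

definition is_PCM :: "'a set \<Rightarrow> ('a \<Rightarrow> 'a \<Rightarrow> bool) \<Rightarrow> nat \<Rightarrow> bool" where
  "is_PCM S E n \<longleftrightarrow> finite S \<and> connected_on E S \<and>
     (\<exists>Z W. bipartition S E Z W \<and> 2 \<le> card Z \<and> card Z \<le> card W \<and> card W = n \<and>
        (\<exists>m. inj_on m Z \<and> (\<forall>z\<in>Z. m z \<in> W \<and> \<not> E z (m z))))"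

text \<open>PCM(n)-free: no induced subgraph is a PCM(n) graph (equivalently, none is isomorphic
  to a PCM(n) graph, since being PCM(n) is isomorphism invariant).\<close>
definition PCM_free :: "'a set \<Rightarrow> ('a \<Rightarrow> 'a \<Rightarrow> bool) \<Rightarrow> nat \<Rightarrow> bool" where
  "PCM_free V E n \<longleftrightarrow> \<not> (\<exists>S \<subseteq> V. is_PCM S (induced E S) n)"

text \<open>The complement of the line graph of K_{2,n}: x_i = (False,i), y_j = (True,j), 1 \<le> i,j \<le> n.\<close>
definition LK2_V :: "nat \<Rightarrow> (bool \<times> nat) set" where
  "LK2_V n = {(b, i). 1 \<le> i \<and> i \<le> n}"

definition LK2_E :: "nat \<Rightarrow> bool \<times> nat \<Rightarrow> bool \<times> nat \<Rightarrow> bool" where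
  "LK2_E n p q \<longleftrightarrow> p \<in> LK2_V n \<and> q \<in> LK2_V n \<and> fst p \<noteq> fst q \<and> snd p \<noteq> snd q"

end

theory Submission
  imports Defs "HOL-Combinatorics.Cycles"
begin

(* A homomorphism from a connected bipartite graph into the complement of L(K_{2,n}) is the same
   as a proper colouring by the indices 1..n that puts the two sides of the bipartition onto the
   two sides {x_i} and {y_j}.

   Partial homomorphisms from the complement of L(K_{2,n}) into G always extend: every new vertex
   goes to the vertex dominating X or to the one dominating Y, according to its side.

   If G contains an induced PCM(n) graph with parts Z, W and complement matching m, send W
   bijectively onto the x_j and each z onto the y-vertex carrying the index of m z. Any extension
   to G sends the vertex dominating W to a vertex adjacent to every x_j, and there is none.

   Conversely, a homomorphism f from a connected S extends as soon as two distinct indices a, b are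
   missing from f(S \<inter> Y) and f(S \<inter> X): send the rest of X to the vertex with index a on the
   side of f(S \<inter> X), and the rest of Y to the vertex with index b on the other side. In a
   PCM(n)-free graph, if S \<inter> X has at least n vertices then some z in S \<inter> Y dominates S \<inter> X,
   for otherwise an irredundant cover of S \<inter> X by neighbourhoods, its private neighbours and
   the vertex dominating Y span an induced PCM(n) graph; the index of z is then missing on S \<inter> X.
   Counting, and the same fact applied to S extended by the vertex dominating Y, give the two
   distinct missing indices. *)

lemma bipartition_edge_crosses:
  assumes "bipartition V E X Y" "E a b"
  shows "a \<in> X \<longleftrightarrow> b \<notin> X"
  using assms unfolding bipartition_def by blast

lemma induced_induced [simp]: "induced (induced E S) S = induced E S"
  by (auto simp: induced_def fun_eq_iff)

lemma connected_on_induced [simp]: "connected_on (induced E S) S \<longleftrightarrow> connected_on E S"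
  unfolding connected_on_def by simp

lemma connected_on_two_colourings_agree:
  fixes P Q :: "'a \<Rightarrow> bool"
  assumes "connected_on E S"
    and "\<And>a b. a \<in> S \<Longrightarrow> b \<in> S \<Longrightarrow> E a b \<Longrightarrow> P a \<noteq> P b \<and> Q a \<noteq> Q b"
  obtains \<beta> where "\<And>s. s \<in> S \<Longrightarrow> P s = \<beta> \<longleftrightarrow> Q s"
proof -
  obtain s0 where "s0 \<in> S" using assms(1) unfolding connected_on_def by blast
  have "(P s \<longleftrightarrow> Q s) \<longleftrightarrow> (P s0 \<longleftrightarrow> Q s0)" if "s \<in> S" for s
  proof -
    have "(induced E S)\<^sup>*\<^sup>* s0 s" using assms(1) \<open>s0 \<in> S\<close> that unfolding connected_on_def by blast
    then show ?thesis
      by (induction rule: rtranclp_induct) (use assms(2) in \<open>auto simp: induced_def\<close>)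
  qed
  then show ?thesis using that[of "P s0 \<longleftrightarrow> Q s0"] by blast
qed

lemma connected_on_has_neighbour:
  assumes "connected_on E S" "x \<in> S" "y \<in> S" "x \<noteq> y"
  shows "\<exists>s\<in>S. E x s"
proof -
  have "(induced E S)\<^sup>*\<^sup>* x y" using assms(1-3) unfolding connected_on_def by blast
  then obtain s where "induced E S x s" using assms(4) by (cases rule: converse_rtranclpE) auto
  then show ?thesis unfolding induced_def by auto
qed

lemma connected_onI_hub:
  assumes "h \<in> S" "\<And>s. s \<in> S \<Longrightarrow> (induced E S)\<^sup>*\<^sup>* s h \<and> (induced E S)\<^sup>*\<^sup>* h s"
  shows "connected_on E S"
  unfolding connected_on_def using assms by (meson empty_iff rtranclp_trans)

lemma connected_on_insert:
  assumes "connected_on E S" "s \<in> S" "E v s" "E s v"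
  shows "connected_on E (insert v S)"
proof (rule connected_onI_hub)
  let ?R = "induced E (insert v S)"
  have mono: "?R\<^sup>*\<^sup>* a b" if "a \<in> S" "b \<in> S" for a b
  proof -
    have "(induced E S)\<^sup>*\<^sup>* a b" using assms(1) that unfolding connected_on_def by blast
    then show ?thesis by (rule rtranclp_mono[THEN predicate2D, rotated]) (auto simp: induced_def)
  qed
  have "?R v s" "?R s v" using assms(2-4) unfolding induced_def by auto
  then show "?R\<^sup>*\<^sup>* a s \<and> ?R\<^sup>*\<^sup>* s a" if "a \<in> insert v S" for a
    using that mono[OF _ assms(2)] mono[OF assms(2)] by auto
qed (use assms(2) in auto)

lemma hom_inducedD:
  assumes "hom S (induced E1 S) T (induced E2 T) f" "p \<in> S"
  shows "f p \<in> T" and "q \<in> S \<Longrightarrow> E1 p q \<Longrightarrow> E2 (f p) (f q)"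
  using assms unfolding hom_def induced_def by blast+

lemma hom_onto_image:
  assumes "hom V1 E1 V2 E2 f"
  shows "hom V1 E1 (f ` V1) (induced E2 (f ` V1)) f"
  using assms unfolding hom_def induced_def by blast

lemma obtain_subset_between:
  assumes "finite U" "A \<subseteq> U" "card A \<le> k" "k \<le> card U"
  obtains W where "A \<subseteq> W" "W \<subseteq> U" "card W = k"
proof -
  have "finite A" using assms(1,2) finite_subset by blast
  moreover have "k - card A \<le> card (U - A)" using assms \<open>finite A\<close> by (simp add: card_Diff_subset)
  then obtain B where "B \<subseteq> U - A" "card B = k - card A" "finite B"
    by (rule obtain_subset_with_card_n)
  moreover have "card (A \<union> B) = card A + card B"
    using calculation by (intro card_Un_disjoint) auto
  ultimately show ?thesis using assms that[of "A \<union> B"] by auto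
qed

lemma cycle_of_list_nth:
  assumes "distinct cs" "i < length cs"
  shows "cycle_of_list cs (cs ! i) = cs ! (Suc i mod length cs)"
proof -
  have "map (cycle_of_list cs) cs = rotate1 cs"
    using cyclic_rotation[OF assms(1), of 1] by simp
  then have "cycle_of_list cs (cs ! i) = rotate1 cs ! i"
    using assms(2) by (metis nth_map)
  then show ?thesis using assms(2) by (simp add: nth_rotate1)
qed

lemma finite_set_has_derangement:
  assumes "finite A" "2 \<le> card A"
  obtains \<sigma> where "\<sigma> permutes A" "\<And>a. a \<in> A \<Longrightarrow> \<sigma> a \<noteq> a"
proof -
  obtain cs where cs: "distinct cs" "set cs = A" using finite_distinct_list[OF assms(1)] by blast
  have len: "2 \<le> length cs" using assms(2) distinct_card[OF cs(1)] cs(2) by simp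
  have "cycle_of_list cs a \<noteq> a" if a: "a \<in> A" for a
  proof -
    obtain i where i: "i < length cs" "a = cs ! i" using a by (auto simp flip: cs(2) simp: in_set_conv_nth)
    have "Suc i mod length cs \<noteq> i" using i(1) len by (cases "Suc i = length cs") auto
    moreover have "Suc i mod length cs < length cs" using i(1) by (intro mod_less_divisor) linarith
    ultimately have "cs ! (Suc i mod length cs) \<noteq> cs ! i"
      using i(1) cs(1) by (simp add: nth_eq_iff_index_eq)
    then show ?thesis using i cycle_of_list_nth[OF cs(1) i(1)] by simp
  qed
  then show ?thesis using that cycle_permutes[of cs] cs(2) by blast
qed

lemma exists_irredundant_subcover:
  assumes "finite C" "\<forall>a\<in>A. \<exists>z\<in>C. R z a"
  obtains Z where "Z \<subseteq> C" "\<forall>a\<in>A. \<exists>z\<in>Z. R z a"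
    "\<forall>z\<in>Z. \<exists>a\<in>A. R z a \<and> (\<forall>z'\<in>Z - {z}. \<not> R z' a)"
proof -
  let ?covers = "\<lambda>Z. Z \<subseteq> C \<and> (\<forall>a\<in>A. \<exists>z\<in>Z. R z a)"
  have "?covers C" using assms(2) by simp
  from ex_has_least_nat[of ?covers C card, OF this]
  obtain Z where Z: "?covers Z" and least: "\<forall>Z'. ?covers Z' \<longrightarrow> card Z \<le> card Z'"
    by blast
  have "finite Z" using Z assms(1) finite_subset by blast
  have "\<exists>a\<in>A. R z a \<and> (\<forall>z'\<in>Z - {z}. \<not> R z' a)" if z: "z \<in> Z" for z
  proof (rule ccontr)
    assume no_private: "\<not> ?thesis"
    have "\<forall>a\<in>A. \<exists>z'\<in>Z - {z}. R z' a"
    proof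
      fix a assume a: "a \<in> A"
      then obtain z'' where "z'' \<in> Z" "R z'' a" using Z by blast
      then show "\<exists>z'\<in>Z - {z}. R z' a" using a no_private by (cases "z'' = z") auto
    qed
    then have "card Z \<le> card (Z - {z})" using least Z by blast
    then show False using card_Diff1_less[OF \<open>finite Z\<close> z] by linarith
  qed
  with Z show ?thesis using that[of Z] by blast
qed

lemma private_neighbours_inj_on:
  assumes "\<forall>z\<in>Z. E z (p z) \<and> (\<forall>z'\<in>Z - {z}. \<not> E z' (p z))"
  shows "inj_on p Z"
proof (rule inj_onI)
  fix a b assume "a \<in> Z" "b \<in> Z" "p a = p b"
  then show "a = b" using assms by (metis DiffI singletonD)
qed

lemma LK2_E_sym: "LK2_E n p q \<Longrightarrow> LK2_E n q p"
  unfolding LK2_E_def by auto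

lemma PCM_hom_to_LK2:
  assumes bip: "bipartition H R Z W" and sym: "\<And>a b. R a b \<Longrightarrow> R b a"
    and W: "finite W" "card W = n"
    and m: "\<forall>z\<in>Z. m z \<in> W \<and> \<not> R z (m z)"
  obtains f where "hom H R (LK2_V n) (LK2_E n) f" "\<forall>j\<in>{1..n}. \<exists>w\<in>W. f w = (False, j)"
proof -
  obtain h where h: "bij_betw h W {0..<n}" using ex_bij_betw_finite_nat[OF W(1)] W(2) by blast
  \<comment> \<open>z and m z get the same index, so their non-adjacency matches that of x_i and y_i\<close>
  define f where "f t = (if t \<in> W then (False, Suc (h t)) else (True, Suc (h (m t))))" for t
  have H: "H = Z \<union> W" "Z \<inter> W = {}" using bip unfolding bipartition_def by auto
  have h_lt: "w \<in> W \<Longrightarrow> h w < n" for w using h by (auto simp: bij_betw_def)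
  have f_V: "f t \<in> LK2_V n" if "t \<in> H" for t
    using that H m h_lt by (auto simp: f_def LK2_V_def Suc_le_eq)
  have f_E: "LK2_E n (f a) (f b)" if "a \<in> Z" "b \<in> W" "R a b" for a b
  proof -
    have "m a \<noteq> b" using m that by blast
    then have "h (m a) \<noteq> h b"
      using m that(1,2) h by (auto simp: bij_betw_def inj_on_def)
    then show ?thesis
      using f_V[of a] f_V[of b] that(1,2) H by (auto simp: f_def LK2_E_def)
  qed
  have "hom H R (LK2_V n) (LK2_E n) f"
    unfolding hom_def
  proof (intro conjI ballI allI impI)
    fix a b assume ab: "a \<in> H \<and> b \<in> H \<and> R a b"
    then consider "a \<in> Z" "b \<in> W" | "a \<in> W" "b \<in> Z" using bip unfolding bipartition_def by blast
    then show "LK2_E n (f a) (f b)"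
    proof cases
      case 1
      then show ?thesis using f_E ab by blast
    next
      case 2
      then show ?thesis using f_E[of b a] sym ab LK2_E_sym by blast
    qed
  qed (rule f_V)
  moreover have "\<exists>w\<in>W. f w = (False, j)" if "j \<in> {1..n}" for j
  proof -
    have "j - 1 \<in> h ` W" using that h by (auto simp: bij_betw_def)
    then obtain w where "w \<in> W" "h w = j - 1" by (metis imageE)
    then show ?thesis using that by (intro bexI[of _ w]) (auto simp: f_def)
  qed
  ultimately show ?thesis using that by blast
qed

locale bipartite_graph =
  fixes V :: "'a set" and E :: "'a \<Rightarrow> 'a \<Rightarrow> bool" and X Y :: "'a set"
  assumes graph: "graph V E" and bipartition: "bipartition V E X Y"
begin

lemma edge_sym: "E a b \<Longrightarrow> E b a"
  using graph unfolding graph_def by blast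

lemma edge_between: "E a b \<Longrightarrow> a \<in> X \<and> b \<in> Y \<or> a \<in> Y \<and> b \<in> X"
  using bipartition unfolding bipartition_def by blast

lemma X_Y_disjoint: "X \<inter> Y = {}" and X_Un_Y: "X \<union> Y = V"
  using bipartition unfolding bipartition_def by auto

lemma swap: "bipartite_graph V E Y X"
  using graph bipartition unfolding bipartite_graph_def bipartition_def by blast

lemmas edge_crosses = bipartition_edge_crosses[OF bipartition]

lemma dominating_vertex_in_X:
  assumes "\<forall>y\<in>Y. E v y" "Y \<noteq> {}"
  shows "v \<in> X"
proof -
  obtain y where "y \<in> Y" using assms(2) by blast
  then show ?thesis using edge_between[of v y] assms(1) X_Y_disjoint by blast
qed

lemma PCM_from_private_neighbours:
  assumes Z: "Z \<subseteq> Y" "2 \<le> card Z" "card Z \<le> n"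
    and W: "W \<subseteq> X" "card W = n"
    and hub: "w \<in> W" "\<forall>z\<in>Z. E w z"
    and cover: "\<forall>x\<in>W. \<exists>z\<in>Z. E z x"
    and p: "\<forall>z\<in>Z. p z \<in> W \<and> E z (p z) \<and> (\<forall>z'\<in>Z - {z}. \<not> E z' (p z))"
  shows "is_PCM (Z \<union> W) (induced E (Z \<union> W)) n"
proof -
  let ?H = "Z \<union> W"
  have fin: "finite Z" "finite W" using Z(2,3) W(2) by (auto intro: card_ge_0_finite)
  obtain \<sigma> where \<sigma>: "\<sigma> permutes Z" "\<And>z. z \<in> Z \<Longrightarrow> \<sigma> z \<noteq> z"
    using finite_set_has_derangement[OF fin(1) Z(2)] by blast
  have "inj_on p Z" using p by (intro private_neighbours_inj_on[where E = E]) blast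
  then have matching: "inj_on (p \<circ> \<sigma>) Z"
    using \<sigma>(1) by (simp add: comp_inj_on permutes_image permutes_inj_on)
  have hub_reach: "(induced E ?H)\<^sup>*\<^sup>* s w \<and> (induced E ?H)\<^sup>*\<^sup>* w s" if s: "s \<in> ?H" for s
  proof (cases "s \<in> Z")
    case True
    then show ?thesis using hub edge_sym by (auto simp: induced_def)
  next
    case False
    then obtain z where "z \<in> Z" "E z s" using s cover by auto
    then have "induced E ?H s z" "induced E ?H z s" "induced E ?H z w" "induced E ?H w z"
      using s hub edge_sym by (auto simp: induced_def)
    then show ?thesis by (meson converse_rtranclp_into_rtranclp r_into_rtranclp)
  qed
  have "connected_on (induced E ?H) ?H"
    using connected_onI_hub[of w ?H] hub(1) hub_reach by simp
  moreover have "bipartition ?H (induced E ?H) Z W"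
    using Z(1) W(1) X_Y_disjoint by (auto simp: bipartition_def induced_def dest!: edge_between)
  moreover have "\<forall>z\<in>Z. (p \<circ> \<sigma>) z \<in> W \<and> \<not> induced E ?H z ((p \<circ> \<sigma>) z)"
  proof
    fix z assume "z \<in> Z"
    then have "\<sigma> z \<in> Z" "z \<in> Z - {\<sigma> z}" using \<sigma>(2)[of z] permutes_in_image[OF \<sigma>(1)] by auto
    then show "(p \<circ> \<sigma>) z \<in> W \<and> \<not> induced E ?H z ((p \<circ> \<sigma>) z)"
      using p by (auto simp: induced_def)
  qed
  ultimately show ?thesis
    unfolding is_PCM_def using fin Z(2,3) W(2) matching
    by (intro conjI exI[of _ Z] exI[of _ W] exI[of _ "p \<circ> \<sigma>"]) auto
qed

lemma card_insert_hub_private_neighbours: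
  assumes "finite Z" "2 \<le> card Z" "\<forall>z\<in>Z. E w z"
    and p: "\<forall>z\<in>Z. E z (p z) \<and> (\<forall>z'\<in>Z - {z}. \<not> E z' (p z))"
  shows "card (insert w (p ` Z)) = Suc (card Z)"
proof -
  have "w \<notin> p ` Z"
  proof
    assume "w \<in> p ` Z"
    then obtain z where z: "z \<in> Z" "w = p z" by blast
    have "\<not> card Z \<le> Suc 0" using assms(2) by simp
    then obtain z' where "z' \<in> Z - {z}" using card_le_Suc0_iff_eq[OF assms(1)] by blast
    then have "\<not> E z' w" "E z' w" using p z assms(3) edge_sym by auto
    then show False by blast
  qed
  moreover have "card (p ` Z) = card Z"
    using private_neighbours_inj_on[of Z E p] p by (simp add: card_image)
  ultimately show ?thesis using assms(1) by simp
qed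

lemma PCM_from_irredundant_cover:
  assumes fin: "finite V" and n: "3 \<le> n"
    and w: "w \<in> V" "\<forall>y\<in>Y. E w y"
    and A: "A \<subseteq> X" "n \<le> card A"
    and Z: "Z \<subseteq> Y" "2 \<le> card Z" "\<forall>x\<in>A. \<exists>z\<in>Z. E z x"
    and p: "\<forall>z\<in>Z. p z \<in> A \<and> E z (p z) \<and> (\<forall>z'\<in>Z - {z}. \<not> E z' (p z))"
  shows "\<exists>H\<subseteq>V. is_PCM H (induced E H) n"
proof -
  have "finite Z" using Z(2) card_ge_0_finite by force
  \<comment> \<open>at most n - 1 cover vertices are kept, so that w and their private neighbours fit into n\<close>
  define k where "k = min (card Z) (n - 1)"
  obtain Z' where Z': "Z' \<subseteq> Z" "card Z' = k" and "finite Z'"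
    using obtain_subset_with_card_n[of k Z] k_def by auto
  have k: "2 \<le> k" "k < n" using Z(2) n k_def by auto
  have "Z' \<subseteq> Y" "\<forall>z\<in>Z'. E w z" using Z'(1) Z(1) w(2) by auto
  obtain z0 where "z0 \<in> Z'" using k(1) Z'(2) by fastforce
  then have "w \<in> X" using dominating_vertex_in_X[OF w(2)] \<open>Z' \<subseteq> Y\<close> by blast
  define U where "U = (\<Union>z\<in>Z'. {x. E z x})"
  have "U \<subseteq> X" using \<open>Z' \<subseteq> Y\<close> X_Y_disjoint by (auto simp: U_def dest: edge_between)
  then have "finite U" using X_Un_Y fin finite_subset by blast
  have p': "\<forall>z\<in>Z'. E z (p z) \<and> (\<forall>z'\<in>Z' - {z}. \<not> E z' (p z))" using p Z'(1) by blast
  let ?B = "insert w (p ` Z')"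
  have "card ?B = Suc k"
    using card_insert_hub_private_neighbours[OF \<open>finite Z'\<close> _ \<open>\<forall>z\<in>Z'. E w z\<close> p'] Z'(2) k
    by simp
  have "?B \<subseteq> U"
    using \<open>z0 \<in> Z'\<close> \<open>\<forall>z\<in>Z'. E w z\<close> edge_sym p Z'(1) unfolding U_def by blast
  have U_large: "n \<le> card U"
  proof (cases "card Z \<le> n - 1")
    case True
    then have "Z' = Z" using Z' k_def card_subset_eq[OF \<open>finite Z\<close> Z'(1)] by simp
    then have "A \<subseteq> U" using Z(3) unfolding U_def by blast
    then have "card A \<le> card U" by (rule card_mono[OF \<open>finite U\<close>])
    then show ?thesis using A(2) by linarith
  next
    case False
    then have "card ?B = n" using \<open>card ?B = Suc k\<close> k_def n by simp
    then show ?thesis using card_mono[OF \<open>finite U\<close> \<open>?B \<subseteq> U\<close>] by simp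
  qed
  have "card ?B \<le> n" using \<open>card ?B = Suc k\<close> k by simp
  then obtain W where W: "?B \<subseteq> W" "W \<subseteq> U" "card W = n"
    using obtain_subset_between[OF \<open>finite U\<close> \<open>?B \<subseteq> U\<close> _ U_large] by blast
  have "is_PCM (Z' \<union> W) (induced E (Z' \<union> W)) n"
  proof (rule PCM_from_private_neighbours)
    show "W \<subseteq> X" using W(2) \<open>U \<subseteq> X\<close> by blast
    show "\<forall>x\<in>W. \<exists>z\<in>Z'. E z x" using W(2) unfolding U_def by blast
    show "\<forall>z\<in>Z'. p z \<in> W \<and> E z (p z) \<and> (\<forall>z'\<in>Z' - {z}. \<not> E z' (p z))"
      using p Z'(1) W(1) by blast
  qed (use \<open>Z' \<subseteq> Y\<close> \<open>\<forall>z\<in>Z'. E w z\<close> Z'(2) k W in simp_all)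
  moreover have "Z' \<union> W \<subseteq> V" using \<open>Z' \<subseteq> Y\<close> W(2) \<open>U \<subseteq> X\<close> X_Un_Y by blast
  ultimately show ?thesis by blast
qed

lemma PCM_free_imp_common_neighbour:
  assumes fin: "finite V" and n: "3 \<le> n"
    and w: "w \<in> V" "\<forall>y\<in>Y. E w y"
    and free: "PCM_free V E n"
    and S: "S \<subseteq> V" "connected_on E S" "n \<le> card (S \<inter> X)"
  shows "\<exists>z\<in>S \<inter> Y. \<forall>x\<in>S \<inter> X. E z x"
proof (rule ccontr)
  assume no_common: "\<not> ?thesis"
  have "finite (S \<inter> Y)" using S(1) fin finite_subset by blast
  have cover: "\<forall>x\<in>S \<inter> X. \<exists>z\<in>S \<inter> Y. E z x"
  proof
    fix x assume x: "x \<in> S \<inter> X"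
    have "S \<inter> X \<noteq> {x}" using S(3) n by (intro notI) simp
    then obtain x' where "x' \<in> S" "x' \<noteq> x" using x by blast
    then obtain s where "s \<in> S" "E x s" using connected_on_has_neighbour[OF S(2)] x by blast
    moreover have "s \<in> Y" using edge_between[OF \<open>E x s\<close>] x X_Y_disjoint by blast
    ultimately show "\<exists>z\<in>S \<inter> Y. E z x" using edge_sym by blast
  qed
  obtain Z where Z: "Z \<subseteq> S \<inter> Y" "\<forall>x\<in>S \<inter> X. \<exists>z\<in>Z. E z x"
    and irredundant: "\<forall>z\<in>Z. \<exists>a\<in>S \<inter> X. E z a \<and> (\<forall>z'\<in>Z - {z}. \<not> E z' a)"
    using exists_irredundant_subcover[OF \<open>finite (S \<inter> Y)\<close> cover] by blast
  obtain p where p: "\<forall>z\<in>Z. p z \<in> S \<inter> X \<and> E z (p z) \<and> (\<forall>z'\<in>Z - {z}. \<not> E z' (p z))"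
    using bchoice[OF irredundant[unfolded Bex_def]] by blast
  have "2 \<le> card Z"
  proof (rule ccontr)
    assume "\<not> 2 \<le> card Z"
    moreover have "finite Z" using Z(1) \<open>finite (S \<inter> Y)\<close> finite_subset by blast
    moreover have "S \<inter> X \<noteq> {}" using S(3) n by (intro notI) simp
    then have "Z \<noteq> {}" using Z(2) by blast
    ultimately have "card Z = 1" using card_gt_0_iff[of Z] by linarith
    then obtain z where "Z = {z}" by (rule card_1_singletonE)
    then show False using no_common Z by auto
  qed
  have "S \<inter> X \<subseteq> X" "Z \<subseteq> Y" using Z(1) by auto
  from PCM_from_irredundant_cover[OF fin n w this(1) S(3) this(2) \<open>2 \<le> card Z\<close> Z(2)] p
  have "\<exists>H\<subseteq>V. is_PCM H (induced E H) n" by blast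
  then show False using free unfolding PCM_free_def by blast
qed

lemma proper_colouring_misses_colour:
  assumes fin: "finite V" and n: "3 \<le> n"
    and w: "w \<in> V" "\<forall>y\<in>Y. E w y"
    and free: "PCM_free V E n"
    and S: "S \<subseteq> V" "connected_on E S"
    and c: "c ` S \<subseteq> {1..n}" "\<And>p q. p \<in> S \<Longrightarrow> q \<in> S \<Longrightarrow> E p q \<Longrightarrow> c p \<noteq> c q"
  shows "\<exists>b\<in>{1..n}. b \<notin> c ` (S \<inter> X)"
proof (cases "n \<le> card (S \<inter> X)")
  case True
  then obtain z where z: "z \<in> S \<inter> Y" "\<forall>x\<in>S \<inter> X. E z x"
    using PCM_free_imp_common_neighbour[OF fin n w free S] by blast
  have "c z \<notin> c ` (S \<inter> X)"
  proof
    assume "c z \<in> c ` (S \<inter> X)"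
    then obtain x where "x \<in> S \<inter> X" "c z = c x" by blast
    then show False using c(2)[of z x] z by blast
  qed
  then show ?thesis using c(1) z(1) by blast
next
  case False
  have "finite (S \<inter> X)" using S(1) fin finite_subset by blast
  then have "card (c ` (S \<inter> X)) < card {1..n}"
    using card_image_le[of "S \<inter> X" c] False by simp
  then have "\<not> {1..n} \<subseteq> c ` (S \<inter> X)"
    using card_mono[OF \<open>finite (S \<inter> X)\<close>[THEN finite_imageI]] by (meson leD)
  then show ?thesis by blast
qed

lemma colour_classes_miss_different_colours:
  assumes fin: "finite V" and n: "3 \<le> n"
    and v: "v \<in> V" "\<forall>y\<in>Y. E v y" and "Y \<noteq> {}"
    and free: "PCM_free V E n"
    and S: "S \<subseteq> V" "connected_on E S"
    and c: "\<And>p q. p \<in> S \<Longrightarrow> q \<in> S \<Longrightarrow> E p q \<Longrightarrow> c p \<noteq> c q"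
    and a: "c ` (S \<inter> X) = {1..n} - {a}" "c ` (S \<inter> Y) = {1..n} - {a}"
  shows False
proof -
  have "v \<in> X" using dominating_vertex_in_X v(2) \<open>Y \<noteq> {}\<close> by blast
  show False
  proof (cases "v \<in> S")
    case True
    then have "c v \<in> c ` (S \<inter> Y)" using \<open>v \<in> X\<close> a by blast
    then obtain y where "y \<in> S \<inter> Y" "c v = c y" by blast
    then show False using c[of v y] True v(2) by blast
  next
    case False
    have "finite (S \<inter> X)" using S(1) fin finite_subset by blast
    have "n - 1 \<le> card (S \<inter> X)"
      using card_image_le[OF \<open>finite (S \<inter> X)\<close>, of c] a(1) by (simp add: card_Diff_singleton_if split: if_splits)
    have "1 \<in> {1..n} - {a} \<or> 2 \<in> {1..n} - {a}" using n by auto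
    then have "c ` (S \<inter> Y) \<noteq> {}" using a(2) by blast
    then obtain y where y: "y \<in> S \<inter> Y" by blast
    have "y \<in> S" "E v y" using y v(2) by auto
    with connected_on_insert[OF S(2)] have S': "connected_on E (insert v S)"
      using edge_sym[OF \<open>E v y\<close>] by blast
    have "insert v S \<inter> X = insert v (S \<inter> X)" using \<open>v \<in> X\<close> by blast
    then have "card (insert v S \<inter> X) = Suc (card (S \<inter> X))"
      using False \<open>finite (S \<inter> X)\<close> by simp
    then have large: "n \<le> card (insert v S \<inter> X)" using \<open>n - 1 \<le> card (S \<inter> X)\<close> by linarith
    have "insert v S \<subseteq> V" using S(1) v(1) by blast
    from PCM_free_imp_common_neighbour[OF fin n v(1,2) free this S' large]
    obtain z where z: "z \<in> insert v S \<inter> Y" "\<forall>x\<in>insert v S \<inter> X. E z x" by blast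
    then have "z \<in> S \<inter> Y" using \<open>v \<in> X\<close> X_Y_disjoint by blast
    then have "c z \<in> c ` (S \<inter> Y)" by (rule imageI)
    then have "c z \<in> c ` (S \<inter> X)" using a by simp
    then obtain x where "x \<in> S \<inter> X" "c z = c x" by blast
    then show False using c[of z x] z(2) \<open>z \<in> S \<inter> Y\<close> by blast
  qed
qed

lemma two_distinct_missing_colours:
  assumes fin: "finite V" and n: "3 \<le> n"
    and u: "u \<in> V" "\<forall>x\<in>X. E u x" and v: "v \<in> V" "\<forall>y\<in>Y. E v y" and "Y \<noteq> {}"
    and free: "PCM_free V E n"
    and S: "S \<subseteq> V" "connected_on E S"
    and c: "c ` S \<subseteq> {1..n}" "\<And>p q. p \<in> S \<Longrightarrow> q \<in> S \<Longrightarrow> E p q \<Longrightarrow> c p \<noteq> c q"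
  shows "\<exists>a\<in>{1..n}. \<exists>b\<in>{1..n}. a \<noteq> b \<and> a \<notin> c ` (S \<inter> Y) \<and> b \<notin> c ` (S \<inter> X)"
proof (rule ccontr)
  assume "\<not> ?thesis"
  then have same: "a' = b'" if "a' \<in> {1..n}" "b' \<in> {1..n}" "a' \<notin> c ` (S \<inter> Y)" "b' \<notin> c ` (S \<inter> X)"
    for a' b' using that by blast
  obtain b where b: "b \<in> {1..n}" "b \<notin> c ` (S \<inter> X)"
    using proper_colouring_misses_colour[OF fin n v free S c] by blast
  interpret swapped: bipartite_graph V E Y X by (rule swap)
  obtain a where a: "a \<in> {1..n}" "a \<notin> c ` (S \<inter> Y)"
    using swapped.proper_colouring_misses_colour[OF fin n u free S c] by blast
  have "a = b" using same[OF a(1) b(1) a(2) b(2)] .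
  have X_colours: "c ` (S \<inter> X) = {1..n} - {a}"
  proof
    show "c ` (S \<inter> X) \<subseteq> {1..n} - {a}" using c(1) b(2) \<open>a = b\<close> by blast
    show "{1..n} - {a} \<subseteq> c ` (S \<inter> X)" using same[OF a(1) _ a(2)] by blast
  qed
  have Y_colours: "c ` (S \<inter> Y) = {1..n} - {a}"
  proof
    show "c ` (S \<inter> Y) \<subseteq> {1..n} - {a}" using c(1) a(2) by blast
    show "{1..n} - {a} \<subseteq> c ` (S \<inter> Y)" using same[OF _ b(1) _ b(2)] \<open>a = b\<close> by blast
  qed
  show False
    using colour_classes_miss_different_colours[OF fin n v \<open>Y \<noteq> {}\<close> free S c(2) X_colours Y_colours] .
qed

lemma hom_to_LK2_extends:
  assumes f: "\<forall>p\<in>S. f p \<in> LK2_V n" "\<And>p q. p \<in> S \<Longrightarrow> q \<in> S \<Longrightarrow> E p q \<Longrightarrow> LK2_E n (f p) (f q)"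
    and side: "\<forall>p\<in>S. fst (f p) = \<beta> \<longleftrightarrow> p \<in> X"
    and ab: "a \<in> {1..n}" "b \<in> {1..n}" "a \<noteq> b" "a \<notin> snd ` f ` (S \<inter> Y)" "b \<notin> snd ` f ` (S \<inter> X)"
  shows "\<exists>g. hom V E (LK2_V n) (LK2_E n) g \<and> (\<forall>x\<in>S. g x = f x)"
proof -
  define g where "g x = (if x \<in> S then f x else if x \<in> X then (\<beta>, a) else (\<not> \<beta>, b))" for x
  have g_V: "g x \<in> LK2_V n" for x using f(1) ab(1,2) by (simp add: g_def LK2_V_def)
  have edge_X_Y: "LK2_E n (g x) (g y)" if xy: "x \<in> X" "y \<in> Y" "E x y" for x y
  proof -
    have "y \<notin> X" using xy(2) X_Y_disjoint by blast
    show ?thesis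
    proof (cases "x \<in> S"; cases "y \<in> S")
      assume "x \<in> S" "y \<in> S"
      then show ?thesis using f(2) xy(3) by (simp add: g_def)
    next
      assume "x \<in> S" "y \<notin> S"
      moreover have "snd (f x) \<in> snd ` f ` (S \<inter> X)" using \<open>x \<in> S\<close> xy(1) by simp
      then have "snd (f x) \<noteq> b" using ab(5) by blast
      moreover have "fst (f x) = \<beta>" using side \<open>x \<in> S\<close> xy(1) by blast
      ultimately show ?thesis
        using g_V[of x] g_V[of y] \<open>y \<notin> X\<close> by (simp add: g_def LK2_E_def)
    next
      assume "x \<notin> S" "y \<in> S"
      moreover have "snd (f y) \<in> snd ` f ` (S \<inter> Y)" using \<open>y \<in> S\<close> xy(2) by simp
      then have "snd (f y) \<noteq> a" using ab(4) by blast
      moreover have "fst (f y) \<noteq> \<beta>" using side \<open>y \<in> S\<close> \<open>y \<notin> X\<close> by blast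
      ultimately show ?thesis
        using g_V[of x] g_V[of y] xy(1) by (simp add: g_def LK2_E_def)
    next
      assume "x \<notin> S" "y \<notin> S"
      then show ?thesis
        using g_V[of x] g_V[of y] xy(1) \<open>y \<notin> X\<close> ab(3) by (simp add: g_def LK2_E_def)
    qed
  qed
  have "hom V E (LK2_V n) (LK2_E n) g"
    unfolding hom_def
  proof (intro conjI ballI allI impI)
    fix x y assume "x \<in> V \<and> y \<in> V \<and> E x y"
    then have "E x y" by blast
    then consider "x \<in> X" "y \<in> Y" | "x \<in> Y" "y \<in> X" using edge_between by blast
    then show "LK2_E n (g x) (g y)"
    proof cases
      case 1
      then show ?thesis using edge_X_Y \<open>E x y\<close> by blast
    next
      case 2
      then show ?thesis using edge_X_Y[of y x] edge_sym[OF \<open>E x y\<close>] LK2_E_sym by blast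
    qed
  qed (rule g_V)
  then show ?thesis unfolding g_def by auto
qed

lemma PCM_free_imp_HH_morphic_to_LK2:
  assumes fin: "finite V" and n: "3 \<le> n"
    and u: "u \<in> V" "\<forall>x\<in>X. E u x" and v: "v \<in> V" "\<forall>y\<in>Y. E v y" and "Y \<noteq> {}"
    and free: "PCM_free V E n"
  shows "HH_morphic V E (LK2_V n) (LK2_E n)"
  unfolding HH_morphic_def
proof (intro allI impI)
  fix S T f
  assume "S \<subseteq> V \<and> finite S \<and> connected_on E S \<and> T \<subseteq> LK2_V n \<and>
    hom S (induced E S) T (induced (LK2_E n) T) f \<and> f ` S = T"
  then have S: "S \<subseteq> V" "connected_on E S" and "T \<subseteq> LK2_V n"
    and hom: "hom S (induced E S) T (induced (LK2_E n) T) f" by auto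
  have f_V: "\<forall>p\<in>S. f p \<in> LK2_V n" using hom_inducedD(1)[OF hom] \<open>T \<subseteq> LK2_V n\<close> by blast
  have f_E: "LK2_E n (f p) (f q)" if "p \<in> S" "q \<in> S" "E p q" for p q
    using hom_inducedD(2)[OF hom that] .
  have colours: "(snd \<circ> f) ` S \<subseteq> {1..n}" using f_V by (auto simp: LK2_V_def)
  have proper: "(snd \<circ> f) p \<noteq> (snd \<circ> f) q" if "p \<in> S" "q \<in> S" "E p q" for p q
    using f_E[OF that] by (simp add: LK2_E_def)
  obtain \<beta> where side: "\<forall>p\<in>S. fst (f p) = \<beta> \<longleftrightarrow> p \<in> X"
  proof (rule connected_on_two_colourings_agree[OF S(2)])
    fix a b assume "a \<in> S" "b \<in> S" "E a b"
    then show "fst (f a) \<noteq> fst (f b) \<and> (a \<in> X) \<noteq> (b \<in> X)"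
      using f_E edge_crosses unfolding LK2_E_def by blast
  qed blast
  obtain a b where "a \<in> {1..n}" "b \<in> {1..n}" "a \<noteq> b"
    "a \<notin> (snd \<circ> f) ` (S \<inter> Y)" "b \<notin> (snd \<circ> f) ` (S \<inter> X)"
    using two_distinct_missing_colours[OF fin n u v \<open>Y \<noteq> {}\<close> free S colours proper] by blast
  then show "\<exists>g. hom V E (LK2_V n) (LK2_E n) g \<and> (\<forall>x\<in>S. g x = f x)"
    using hom_to_LK2_extends[OF f_V f_E side] by (simp add: image_comp)
qed

lemma HH_morphic_from_two_coloured:
  fixes V2 :: "'b set" and E2 :: "'b \<Rightarrow> 'b \<Rightarrow> bool" and col :: "'b \<Rightarrow> bool"
  assumes "X \<noteq> {}" "Y \<noteq> {}"
    and u: "u \<in> V" "\<forall>x\<in>X. E u x" and v: "v \<in> V" "\<forall>y\<in>Y. E v y"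
    and col: "\<And>p q. E2 p q \<Longrightarrow> col p \<noteq> col q"
  shows "HH_morphic V2 E2 V E"
  unfolding HH_morphic_def
proof (intro allI impI)
  fix S T f
  assume "S \<subseteq> V2 \<and> finite S \<and> connected_on E2 S \<and> T \<subseteq> V \<and>
    hom S (induced E2 S) T (induced E T) f \<and> f ` S = T"
  then have S: "connected_on E2 S" and "T \<subseteq> V"
    and hom: "hom S (induced E2 S) T (induced E T) f" by auto
  have f_V: "f p \<in> V" if "p \<in> S" for p using hom_inducedD(1)[OF hom that] \<open>T \<subseteq> V\<close> by blast
  have f_E: "E (f p) (f q)" if "p \<in> S" "q \<in> S" "E2 p q" for p q
    using hom_inducedD(2)[OF hom that] .
  interpret swapped: bipartite_graph V E Y X by (rule swap)
  have "v \<in> X" "u \<in> Y"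
    using dominating_vertex_in_X[OF v(2)] swapped.dominating_vertex_in_X[OF u(2)] assms(1,2) by auto
  obtain \<gamma> where side: "\<And>p. p \<in> S \<Longrightarrow> col p = \<gamma> \<longleftrightarrow> f p \<in> X"
  proof (rule connected_on_two_colourings_agree[OF S])
    fix a b assume "a \<in> S" "b \<in> S" "E2 a b"
    then show "col a \<noteq> col b \<and> (f a \<in> X) \<noteq> (f b \<in> X)"
      using col f_E edge_crosses by blast
  qed blast
  define g where "g p = (if p \<in> S then f p else if col p = \<gamma> then v else u)" for p
  have g_V: "g p \<in> V" for p using f_V u(1) v(1) by (simp add: g_def)
  have g_X: "g p \<in> X \<longleftrightarrow> col p = \<gamma>" for p
    using side \<open>v \<in> X\<close> \<open>u \<in> Y\<close> X_Y_disjoint by (auto simp: g_def)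
  have hub_edge: "E (g p) (g q)" if "p \<notin> S" "col p \<noteq> col q" for p q
  proof (cases "col p = \<gamma>")
    case True
    then have "g p = v" "g q \<in> Y" using that g_X[of q] g_V[of q] X_Un_Y by (auto simp: g_def)
    then show ?thesis using v(2) by simp
  next
    case False
    then have "g p = u" "g q \<in> X" using that g_X[of q] by (auto simp: g_def)
    then show ?thesis using u(2) by simp
  qed
  have "hom V2 E2 V E g"
    unfolding hom_def
  proof (intro conjI ballI allI impI)
    fix p q assume pq: "p \<in> V2 \<and> q \<in> V2 \<and> E2 p q"
    show "E (g p) (g q)"
    proof (cases "p \<in> S \<and> q \<in> S")
      case True
      then show ?thesis using f_E pq by (simp add: g_def)
    next
      case False
      then show ?thesis using hub_edge[of p q] hub_edge[of q p] col pq edge_sym by metis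
    qed
  qed (rule g_V)
  then show "\<exists>g. hom V2 E2 V E g \<and> (\<forall>x\<in>S. g x = f x)" unfolding g_def by auto
qed

lemma HH_morphic_to_LK2_imp_PCM_free:
  assumes u: "u \<in> V" "\<forall>x\<in>X. E u x" and v: "v \<in> V" "\<forall>y\<in>Y. E v y"
    and hh: "HH_morphic V E (LK2_V n) (LK2_E n)"
  shows "PCM_free V E n"
  unfolding PCM_free_def
proof
  assume "\<exists>H\<subseteq>V. is_PCM H (induced E H) n"
  then obtain H Z W m where H: "H \<subseteq> V" "finite H" "connected_on E H"
    and bip: "bipartition H (induced E H) Z W" and W: "card W = n"
    and m: "\<forall>z\<in>Z. m z \<in> W \<and> \<not> induced E H z (m z)"
    unfolding is_PCM_def by auto
  have "W \<subseteq> H" "Z \<inter> W = {}" using bip unfolding bipartition_def by blast+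
  obtain \<beta> where side: "\<And>t. t \<in> H \<Longrightarrow> t \<in> Z = \<beta> \<longleftrightarrow> t \<in> X"
  proof (rule connected_on_two_colourings_agree[where E = "induced E H"])
    show "connected_on (induced E H) H" using H(3) by simp
    fix a b assume "induced E H a b"
    then show "(a \<in> Z) \<noteq> (b \<in> Z) \<and> (a \<in> X) \<noteq> (b \<in> X)"
      using bipartition_edge_crosses[OF bip] edge_crosses by (auto simp: induced_def)
  qed blast
  obtain c where c: "c \<in> V" "\<forall>w\<in>W. E c w"
  proof (cases \<beta>)
    case True
    then have "W \<subseteq> Y" using side \<open>W \<subseteq> H\<close> \<open>Z \<inter> W = {}\<close> H(1) X_Un_Y by blast
    then show ?thesis using that v by blast
  next
    case False
    then have "W \<subseteq> X" using side \<open>W \<subseteq> H\<close> \<open>Z \<inter> W = {}\<close> by blast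
    then show ?thesis using that u by blast
  qed
  have "finite W" using H(2) \<open>W \<subseteq> H\<close> finite_subset by blast
  obtain f where f: "hom H (induced E H) (LK2_V n) (LK2_E n) f"
    and onto: "\<forall>j\<in>{1..n}. \<exists>w\<in>W. f w = (False, j)"
    using PCM_hom_to_LK2[OF bip _ \<open>finite W\<close> W m] edge_sym by (auto simp: induced_def)
  have "f ` H \<subseteq> LK2_V n" using f unfolding hom_def by blast
  with hh H hom_onto_image[OF f] obtain g
    where g: "hom V E (LK2_V n) (LK2_E n) g" "\<forall>x\<in>H. g x = f x"
    unfolding HH_morphic_def by blast
  have "snd (g c) \<in> {1..n}" using g(1) c(1) unfolding hom_def LK2_V_def by auto
  then obtain w where "w \<in> W" "f w = (False, snd (g c))" using onto by blast
  moreover have "LK2_E n (g c) (g w)" using g(1) c \<open>w \<in> W\<close> \<open>W \<subseteq> H\<close> H(1) unfolding hom_def by blast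
  ultimately show False using g(2) \<open>W \<subseteq> H\<close> unfolding LK2_E_def by auto
qed

end

theorem lemma6p6:
  fixes V :: "'a set" and E :: "'a \<Rightarrow> 'a \<Rightarrow> bool" and X Y :: "'a set" and n :: nat
  assumes "3 \<le> n"
    and "finite V" and "graph V E"
    and "bipartition V E X Y" and "X \<noteq> {}" and "Y \<noteq> {}"
    and "\<exists>v\<in>V. \<forall>x\<in>X. E v x"
    and "\<exists>v\<in>V. \<forall>y\<in>Y. E v y"
    and "max_degree V E \<ge> n"
  shows "HH_symmetric V E (LK2_V n) (LK2_E n) \<longleftrightarrow> PCM_free V E n"
proof -
  interpret bipartite_graph V E X Y using assms(3,4) by unfold_locales
  obtain u where u: "u \<in> V" "\<forall>x\<in>X. E u x" using assms(7) by blast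
  obtain v where v: "v \<in> V" "\<forall>y\<in>Y. E v y" using assms(8) by blast
  have "HH_morphic (LK2_V n) (LK2_E n) V E"
    by (rule HH_morphic_from_two_coloured[OF assms(5,6) u v, of _ fst]) (simp add: LK2_E_def)
  then show ?thesis
    unfolding HH_symmetric_def
    using HH_morphic_to_LK2_imp_PCM_free[OF u v]
      PCM_free_imp_HH_morphic_to_LK2[OF assms(2,1) u v assms(6)] by blast
qed

end
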